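(* A finite simple graph $G$ is a caterpillar forest (every connected component is a caterpillar, i.e. a tree in which removing all leaves leaves a path) if and only if it admits a $CF$-free circular ordering.
   Context: A circular ordering of a finite set is obtained by placing its elements at distinct points of a circle. A circularly ordered graph is a graph with a circular ordering of its vertices; isomorphism means a graph isomorphism preserving circular orderings; induced circularly ordered subgraphs are induced subgraphs with the restricted ordering. A circular ordering $C$ of $V(G)$ is $CF$-free if no induced circularly ordered subgraph of $(G,C)$ is isomorphic to a member of $CF$. $CF$ consists of the following circularly ordered graphs (vertices $v_1,v_2,\dots$ clockwise in this order; listed edges are all edges): the triangle on $v_1,v_2,v_3$; on $v_1,\dots,v_4$: edges $v_1v_2,v_2v_3,v_3v_4,v_4v_1$; edges $v_1v_2,v_2v_4,v_4v_3,v_3v_1$; edges $v_1v_2,v_2v_3,v_3v_4$; edges $v_3v_1,v_1v_4,v_4v_2$. *)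

theory Defs
  imports Main
begin

definition simple_graph :: "'a set \<Rightarrow> ('a \<Rightarrow> 'a \<Rightarrow> bool) \<Rightarrow> bool" where
  "simple_graph V E \<longleftrightarrow> finite V \<and> (\<forall>x y. E x y \<longrightarrow> x \<in> V \<and> y \<in> V)
     \<and> (\<forall>x y. E x y \<longrightarrow> E y x) \<and> (\<forall>x. \<not> E x x)"

definition induced :: "('a \<Rightarrow> 'a \<Rightarrow> bool) \<Rightarrow> 'a set \<Rightarrow> 'a \<Rightarrow> 'a \<Rightarrow> bool" where
  "induced E S = (\<lambda>a b. E a b \<and> a \<in> S \<and> b \<in> S)"

definition connected_graph :: "'a set \<Rightarrow> ('a \<Rightarrow> 'a \<Rightarrow> bool) \<Rightarrow> bool" where
  "connected_graph V E \<longleftrightarrow> (\<forall>x\<in>V. \<forall>y\<in>V. (induced E V)\<^sup>*\<^sup>* x y)"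

definition has_cycle :: "'a set \<Rightarrow> ('a \<Rightarrow> 'a \<Rightarrow> bool) \<Rightarrow> bool" where
  "has_cycle V E \<longleftrightarrow> (\<exists>xs. length xs \<ge> 3 \<and> distinct xs \<and> set xs \<subseteq> V \<and>
     (\<forall>i < length xs. E (xs ! i) (xs ! ((i + 1) mod length xs))))"

definition is_tree :: "'a set \<Rightarrow> ('a \<Rightarrow> 'a \<Rightarrow> bool) \<Rightarrow> bool" where
  "is_tree V E \<longleftrightarrow> V \<noteq> {} \<and> connected_graph V E \<and> \<not> has_cycle V E"

definition leaves :: "'a set \<Rightarrow> ('a \<Rightarrow> 'a \<Rightarrow> bool) \<Rightarrow> 'a set" where
  "leaves V E = {v \<in> V. card {u \<in> V. E v u} = 1}"

text \<open>A path graph (the empty graph is allowed, so that K1 and K2 are caterpillars).\<close>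
definition is_path_graph :: "'a set \<Rightarrow> ('a \<Rightarrow> 'a \<Rightarrow> bool) \<Rightarrow> bool" where
  "is_path_graph V E \<longleftrightarrow> (\<exists>xs. distinct xs \<and> set xs = V \<and>
     (\<forall>a\<in>V. \<forall>b\<in>V. E a b \<longleftrightarrow> (\<exists>i. Suc i < length xs \<and> {a, b} = {xs ! i, xs ! Suc i})))"

definition is_caterpillar :: "'a set \<Rightarrow> ('a \<Rightarrow> 'a \<Rightarrow> bool) \<Rightarrow> bool" where
  "is_caterpillar V E \<longleftrightarrow> is_tree V E \<and>
     is_path_graph (V - leaves V E) (induced E (V - leaves V E))"

definition components :: "'a set \<Rightarrow> ('a \<Rightarrow> 'a \<Rightarrow> bool) \<Rightarrow> 'a set set" where
  "components V E = {{y \<in> V. (induced E V)\<^sup>*\<^sup>* x y} | x. x \<in> V}"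

definition caterpillar_forest :: "'a set \<Rightarrow> ('a \<Rightarrow> 'a \<Rightarrow> bool) \<Rightarrow> bool" where
  "caterpillar_forest V E \<longleftrightarrow> (\<forall>C \<in> components V E. is_caterpillar C (induced E C))"

text \<open>A circular ordering of V is represented by an injective position map pos into nat
  (points read clockwise in increasing order, wrapping around). A list of distinct vertices
  is in clockwise order iff some rotation of it is increasing in pos; this notion is
  invariant under rotating pos, so it only depends on the induced cyclic order.\<close>

definition circular_ordering :: "'a set \<Rightarrow> ('a \<Rightarrow> nat) \<Rightarrow> bool" where
  "circular_ordering V pos \<longleftrightarrow> inj_on pos V"

definition clockwise :: "('a \<Rightarrow> nat) \<Rightarrow> 'a list \<Rightarrow> bool" where
  "clockwise pos xs \<longleftrightarrow> distinct xs \<and>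
     (\<exists>r. sorted_wrt (\<lambda>a b. pos a < pos b) (rotate r xs))"

text \<open>The family CF: (number of vertices k, edge set on indices 0..k-1), vertices
  v_1,...,v_k clockwise correspond to indices 0,...,k-1.\<close>
definition CF :: "(nat \<times> nat set set) set" where
  "CF = {(3, {{0,1},{1,2},{2,0}}),
         (4, {{0,1},{1,2},{2,3},{3,0}}),
         (4, {{0,1},{1,3},{3,2},{2,0}}),
         (4, {{0,1},{1,2},{2,3}}),
         (4, {{2,0},{0,3},{3,1}})}"

definition contains_pattern ::
  "'a set \<Rightarrow> ('a \<Rightarrow> 'a \<Rightarrow> bool) \<Rightarrow> ('a \<Rightarrow> nat) \<Rightarrow> nat \<Rightarrow> nat set set \<Rightarrow> bool" where
  "contains_pattern V E pos k F \<longleftrightarrow> (\<exists>xs. length xs = k \<and> set xs \<subseteq> V \<and> clockwise pos xs \<and>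
     (\<forall>i<k. \<forall>j<k. i \<noteq> j \<longrightarrow> (E (xs ! i) (xs ! j) \<longleftrightarrow> {i, j} \<in> F)))"

definition CF_free :: "'a set \<Rightarrow> ('a \<Rightarrow> 'a \<Rightarrow> bool) \<Rightarrow> ('a \<Rightarrow> nat) \<Rightarrow> bool" where
  "CF_free V E pos \<longleftrightarrow> (\<forall>(k, F) \<in> CF. \<not> contains_pattern V E pos k F)"

end

theory Submission
  imports Defs "HOL-Library.Product_Lexorder"
begin

text \<open>
  A caterpillar forest is a subgraph of a disjoint union of combs. Colour each comb properly with
  two colours and place one colour class in increasing, the other in decreasing lexicographic order
  of comb coordinates on the circle. All edges then become pairwise non-crossing chords between the
  two resulting arcs, whereas each member of \<open>CF\<close> contains an odd cycle, a path \<open>w x y z\<close>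
  alternating between the arcs, or two crossing chords.

  Conversely, a \<open>CF\<close>-free circular ordering admits no triangle and no 4-cycle, and the ends of every
  path \<open>a b c d\<close> lie on opposite sides of the chord \<open>b c\<close>. Walking along a path, the arc cut off by
  the current edge on the side of the next vertex therefore strictly shrinks, so there is no set of
  vertices of minimum degree two: the graph is a forest. The same separation rules out a vertex with
  three neighbours each having a further neighbour, so a longest path of non-leaves in a component
  contains all its non-leaves: every component is a caterpillar.
\<close>

section \<open>Cyclic orders\<close>

definition cyclic3 :: "('a \<Rightarrow> nat) \<Rightarrow> 'a \<Rightarrow> 'a \<Rightarrow> 'a \<Rightarrow> bool" where
  "cyclic3 pos x y z \<longleftrightarrow> (pos x < pos y \<and> pos y < pos z) \<or> (pos y < pos z \<and> pos z < pos x) \<or>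
     (pos z < pos x \<and> pos x < pos y)"

definition cyclic4 :: "('a \<Rightarrow> nat) \<Rightarrow> 'a \<Rightarrow> 'a \<Rightarrow> 'a \<Rightarrow> 'a \<Rightarrow> bool" where
  "cyclic4 pos w x y z \<longleftrightarrow> (pos w < pos x \<and> pos x < pos y \<and> pos y < pos z) \<or>
     (pos x < pos y \<and> pos y < pos z \<and> pos z < pos w) \<or>
     (pos y < pos z \<and> pos z < pos w \<and> pos w < pos x) \<or>
     (pos z < pos w \<and> pos w < pos x \<and> pos x < pos y)"

lemma ex_rotate_less_length:
  assumes "xs \<noteq> []"
  shows "(\<exists>r. P (rotate r xs)) \<longleftrightarrow> (\<exists>r<length xs. P (rotate r xs))"
  using assms by (metis length_greater_0_conv mod_less_divisor rotate_conv_mod)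

lemma ex_rotate3:
  "(\<exists>r<length [x, y, z]. P (rotate r [x, y, z])) \<longleftrightarrow> P [x, y, z] \<or> P [y, z, x] \<or> P [z, x, y]"
proof -
  have "(\<exists>r<3. Q r) \<longleftrightarrow> Q 0 \<or> Q 1 \<or> Q (2::nat)" for Q
    by (auto simp: numeral_eq_Suc less_Suc_eq)
  then show ?thesis by (simp add: rotate_def eval_nat_numeral)
qed

lemma ex_rotate4:
  "(\<exists>r<length [w, x, y, z]. P (rotate r [w, x, y, z])) \<longleftrightarrow>
     P [w, x, y, z] \<or> P [x, y, z, w] \<or> P [y, z, w, x] \<or> P [z, w, x, y]"
proof -
  have "(\<exists>r<4. Q r) \<longleftrightarrow> Q 0 \<or> Q 1 \<or> Q 2 \<or> Q (3::nat)" for Q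
    by (auto simp: numeral_eq_Suc less_Suc_eq)
  then show ?thesis by (simp add: rotate_def eval_nat_numeral)
qed

lemma sorted_wrt_less3:
  "sorted_wrt (\<lambda>a b. f a < (f b :: nat)) [x, y, z] \<longleftrightarrow> f x < f y \<and> f y < f z"
  by auto

lemma sorted_wrt_less4:
  "sorted_wrt (\<lambda>a b. f a < (f b :: nat)) [w, x, y, z] \<longleftrightarrow> f w < f x \<and> f x < f y \<and> f y < f z"
  by auto

lemma clockwise3_iff: "clockwise pos [x, y, z] \<longleftrightarrow> distinct [x, y, z] \<and> cyclic3 pos x y z"
  unfolding clockwise_def ex_rotate_less_length[of "[x, y, z]", OF list.distinct(2)] ex_rotate3
    sorted_wrt_less3 cyclic3_def ..

lemma clockwise4_iff: "clockwise pos [w, x, y, z] \<longleftrightarrow> distinct [w, x, y, z] \<and> cyclic4 pos w x y z"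
  unfolding clockwise_def ex_rotate_less_length[of "[w, x, y, z]", OF list.distinct(2)] ex_rotate4
    sorted_wrt_less4 cyclic4_def ..

lemma cyclic3_asym: "cyclic3 pos x y z \<Longrightarrow> \<not> cyclic3 pos x z y"
  unfolding cyclic3_def by auto

lemma cyclic3_total:
  "pos x \<noteq> pos y \<Longrightarrow> pos y \<noteq> pos z \<Longrightarrow> pos x \<noteq> pos z \<Longrightarrow> cyclic3 pos x y z \<or> cyclic3 pos x z y"
  unfolding cyclic3_def by linarith

lemma cyclic3_trans: "cyclic3 pos x y z \<Longrightarrow> cyclic3 pos x z w \<Longrightarrow> cyclic3 pos x y w"
  unfolding cyclic3_def by linarith

lemma cyclic4_iff_cyclic3: "cyclic4 pos w x y z \<longleftrightarrow> cyclic3 pos w x y \<and> cyclic3 pos w y z"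
  unfolding cyclic4_def cyclic3_def by linarith

lemma cyclic4_cases:
  assumes "pos a \<noteq> pos b" "pos a \<noteq> pos c" "pos a \<noteq> pos d" "pos b \<noteq> pos c"
    "pos b \<noteq> pos d" "pos c \<noteq> pos d"
  shows "cyclic4 pos a b c d \<or> cyclic4 pos a b d c \<or> cyclic4 pos a c b d \<or> cyclic4 pos a c d b \<or>
    cyclic4 pos a d b c \<or> cyclic4 pos a d c b"
  using assms cyclic3_total[of pos] unfolding cyclic4_iff_cyclic3 by metis

text \<open>The open arc with end points \<open>b\<close> and \<open>c\<close> that contains \<open>d\<close>.\<close>

definition arc :: "('a \<Rightarrow> nat) \<Rightarrow> 'a set \<Rightarrow> 'a \<Rightarrow> 'a \<Rightarrow> 'a \<Rightarrow> 'a set" where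
  "arc pos V b c d = {z \<in> V. if cyclic3 pos c d b then cyclic3 pos c z b else cyclic3 pos b z c}"

lemma arc_psubset:
  assumes distinct: "pos b \<noteq> pos c" "pos b \<noteq> pos d" "pos c \<noteq> pos d" "pos c \<noteq> pos e" "pos d \<noteq> pos e"
    and separated: "cyclic3 pos c b d \<longleftrightarrow> \<not> cyclic3 pos c e d" and "d \<in> V"
  shows "arc pos V c d e \<subset> arc pos V b c d"
proof (cases "cyclic3 pos c d b")
  case True
  then have "cyclic3 pos c e d"
    using separated cyclic3_asym[OF True] by blast
  then have "\<not> cyclic3 pos d e c"
    unfolding cyclic3_def by auto
  then have arcs: "arc pos V c d e = {z \<in> V. cyclic3 pos c z d}"
    "arc pos V b c d = {z \<in> V. cyclic3 pos c z b}"
    using True unfolding arc_def by simp_all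
  have "cyclic3 pos c z b" if "cyclic3 pos c z d" for z
    using that True by (rule cyclic3_trans)
  moreover have "\<not> cyclic3 pos c d d"
    unfolding cyclic3_def by simp
  ultimately show ?thesis
    unfolding arcs using True \<open>d \<in> V\<close> by auto
next
  case False
  then have "cyclic3 pos c b d"
    using cyclic3_total distinct by metis
  then have "cyclic3 pos c d e"
    using separated cyclic3_total distinct by metis
  then have arcs: "arc pos V c d e = {z \<in> V. cyclic3 pos d z c}"
    "arc pos V b c d = {z \<in> V. cyclic3 pos b z c}"
    using False unfolding arc_def cyclic3_def by auto
  have "cyclic3 pos b z c" if "cyclic3 pos d z c" for z
    using that \<open>cyclic3 pos c b d\<close> unfolding cyclic3_def by auto
  moreover have "cyclic3 pos b d c" "\<not> cyclic3 pos d d c"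
    using \<open>cyclic3 pos c b d\<close> unfolding cyclic3_def by auto
  ultimately show ?thesis
    unfolding arcs using \<open>d \<in> V\<close> by auto
qed

lemma all_less3: "(\<forall>i<3. P i) \<longleftrightarrow> P 0 \<and> P 1 \<and> P (2::nat)"
  by (auto simp: less_Suc_eq numeral_eq_Suc)

lemma all_less4: "(\<forall>i<4. P i) \<longleftrightarrow> P 0 \<and> P 1 \<and> P 2 \<and> P (3::nat)"
  by (auto simp: less_Suc_eq numeral_eq_Suc)

lemma contains_pattern3_iff:
  assumes "symp E"
  shows "contains_pattern V E pos 3 F \<longleftrightarrow> (\<exists>x y z. {x, y, z} \<subseteq> V \<and> clockwise pos [x, y, z] \<and>
     (E x y \<longleftrightarrow> {0, 1} \<in> F) \<and> (E x z \<longleftrightarrow> {0, 2} \<in> F) \<and> (E y z \<longleftrightarrow> {1, 2} \<in> F))"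
    (is "_ \<longleftrightarrow> (\<exists>x y z. ?P x y z)")
proof
  assume "contains_pattern V E pos 3 F"
  then obtain xs where xs: "length xs = 3" "set xs \<subseteq> V" "clockwise pos xs"
    and F: "\<And>i j. i < 3 \<Longrightarrow> j < 3 \<Longrightarrow> i \<noteq> j \<Longrightarrow> E (xs ! i) (xs ! j) \<longleftrightarrow> {i, j} \<in> F"
    unfolding contains_pattern_def by blast
  from xs(1) obtain x y z where "xs = [x, y, z]"
    by (auto simp: numeral_eq_Suc length_Suc_conv)
  then have "?P x y z" using xs F[of 0 1] F[of 0 2] F[of 1 2] by simp
  then show "\<exists>x y z. ?P x y z" by blast
next
  assume "\<exists>x y z. ?P x y z"
  then obtain x y z where P: "?P x y z" by blast
  have "E a b \<longleftrightarrow> E b a" for a b using \<open>symp E\<close> by (blast dest: sympD)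
  then have "\<forall>i<3. \<forall>j<3. i \<noteq> j \<longrightarrow> E ([x, y, z] ! i) ([x, y, z] ! j) \<longleftrightarrow> {i, j} \<in> F"
    using P unfolding all_less3 by (simp add: insert_commute)
  then show "contains_pattern V E pos 3 F"
    unfolding contains_pattern_def using P by (intro exI[of _ "[x, y, z]"]) auto
qed

lemma contains_pattern4_iff:
  assumes "symp E"
  shows "contains_pattern V E pos 4 F \<longleftrightarrow> (\<exists>w x y z. {w, x, y, z} \<subseteq> V \<and> clockwise pos [w, x, y, z] \<and>
     (E w x \<longleftrightarrow> {0, 1} \<in> F) \<and> (E w y \<longleftrightarrow> {0, 2} \<in> F) \<and> (E w z \<longleftrightarrow> {0, 3} \<in> F) \<and>
     (E x y \<longleftrightarrow> {1, 2} \<in> F) \<and> (E x z \<longleftrightarrow> {1, 3} \<in> F) \<and> (E y z \<longleftrightarrow> {2, 3} \<in> F))"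
    (is "_ \<longleftrightarrow> (\<exists>w x y z. ?P w x y z)")
proof
  assume "contains_pattern V E pos 4 F"
  then obtain xs where xs: "length xs = 4" "set xs \<subseteq> V" "clockwise pos xs"
    and F: "\<And>i j. i < 4 \<Longrightarrow> j < 4 \<Longrightarrow> i \<noteq> j \<Longrightarrow> E (xs ! i) (xs ! j) \<longleftrightarrow> {i, j} \<in> F"
    unfolding contains_pattern_def by blast
  from xs(1) obtain w x y z where "xs = [w, x, y, z]"
    by (auto simp: numeral_eq_Suc length_Suc_conv)
  then have "?P w x y z"
    using xs F[of 0 1] F[of 0 2] F[of 0 3] F[of 1 2] F[of 1 3] F[of 2 3]
    by (simp add: numeral_eq_Suc)
  then show "\<exists>w x y z. ?P w x y z" by blast
next
  assume "\<exists>w x y z. ?P w x y z"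
  then obtain w x y z where P: "?P w x y z" by blast
  have "E a b \<longleftrightarrow> E b a" for a b using \<open>symp E\<close> by (blast dest: sympD)
  then have "\<forall>i<4. \<forall>j<4. i \<noteq> j \<longrightarrow> E ([w, x, y, z] ! i) ([w, x, y, z] ! j) \<longleftrightarrow> {i, j} \<in> F"
    using P unfolding all_less4 by (simp add: insert_commute numeral_eq_Suc)
  then show "contains_pattern V E pos 4 F"
    unfolding contains_pattern_def using P by (intro exI[of _ "[w, x, y, z]"]) auto
qed

section \<open>Paths and components of simple graphs\<close>

definition is_path :: "('a \<Rightarrow> 'a \<Rightarrow> bool) \<Rightarrow> 'a list \<Rightarrow> bool" where
  "is_path E xs \<longleftrightarrow> distinct xs \<and> (\<forall>i. Suc i < length xs \<longrightarrow> E (xs ! i) (xs ! Suc i))"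

definition min_degree_ge2 :: "('a \<Rightarrow> 'a \<Rightarrow> bool) \<Rightarrow> 'a set \<Rightarrow> bool" where
  "min_degree_ge2 E T \<longleftrightarrow> (\<forall>v\<in>T. \<exists>u w. u \<noteq> w \<and> u \<in> T \<and> w \<in> T \<and> E v u \<and> E v w)"

definition component_of :: "'a set \<Rightarrow> ('a \<Rightarrow> 'a \<Rightarrow> bool) \<Rightarrow> 'a \<Rightarrow> 'a set" where
  "component_of V E x = {y \<in> V. E\<^sup>*\<^sup>* x y}"

definition pendant :: "('a \<Rightarrow> 'a \<Rightarrow> bool) \<Rightarrow> 'a \<Rightarrow> 'a \<Rightarrow> bool" where
  "pendant E v u \<longleftrightarrow> (\<forall>w. E v w \<longleftrightarrow> w = u)"

definition caterpillar_spine :: "('a \<Rightarrow> 'a \<Rightarrow> bool) \<Rightarrow> 'a set \<Rightarrow> 'a list \<Rightarrow> bool" where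
  "caterpillar_spine E C xs \<longleftrightarrow> xs \<noteq> [] \<and> distinct xs \<and> set xs \<subseteq> C \<and>
    (\<forall>a\<in>set xs. \<forall>b\<in>set xs. E a b \<longleftrightarrow> (\<exists>i. Suc i < length xs \<and> {a, b} = {xs ! i, xs ! Suc i})) \<and>
    (\<forall>v\<in>C - set xs. \<exists>u\<in>set xs. pendant E v u)"

lemma induced_subset: "S \<subseteq> C \<Longrightarrow> induced (induced E C) S = induced E S"
  unfolding induced_def by (auto simp: fun_eq_iff)

lemma is_path_Cons:
  assumes "is_path E xs" "w \<notin> set xs" "xs \<noteq> [] \<Longrightarrow> E w (hd xs)"
  shows "is_path E (w # xs)"
  using assms unfolding is_path_def by (auto simp: nth_Cons hd_conv_nth split: nat.split)

lemma is_path_snoc: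
  assumes "is_path E xs" "w \<notin> set xs" "xs \<noteq> [] \<Longrightarrow> E (last xs) w"
  shows "is_path E (xs @ [w])"
proof -
  have "E ((xs @ [w]) ! i) ((xs @ [w]) ! Suc i)" if "Suc i < length (xs @ [w])" for i
  proof (cases "Suc i < length xs")
    case True
    then show ?thesis
      using assms(1) unfolding is_path_def by (simp add: nth_append)
  next
    case False
    then have "i = length xs - 1" "xs \<noteq> []"
      using that by auto
    then show ?thesis
      using assms(3) by (simp add: nth_append last_conv_nth)
  qed
  then show ?thesis
    using assms(1,2) unfolding is_path_def by simp
qed

lemma ex_longest_path:
  assumes "finite S" "s \<in> S"
  shows "\<exists>xs. is_path E xs \<and> set xs \<subseteq> S \<and> xs \<noteq> [] \<and>
    (\<forall>ys. is_path E ys \<longrightarrow> set ys \<subseteq> S \<longrightarrow> length ys \<le> length xs)"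
proof -
  let ?P = "\<lambda>ys. is_path E ys \<and> set ys \<subseteq> S"
  have "length ys < Suc (card S)" if "?P ys" for ys
    using that distinct_card[of ys] card_mono[OF assms(1), of "set ys"]
    unfolding is_path_def by simp
  moreover have "?P [s]"
    using assms(2) unfolding is_path_def by simp
  ultimately obtain xs where xs: "?P xs" and longest: "\<And>ys. ?P ys \<Longrightarrow> length ys \<le> length xs"
    using ex_has_greatest_nat[of ?P "[s]" length] by blast
  have "xs \<noteq> []"
    using longest[OF \<open>?P [s]\<close>] by auto
  with xs longest show ?thesis by blast
qed

locale finite_simple_graph =
  fixes V :: "'a set" and E :: "'a \<Rightarrow> 'a \<Rightarrow> bool"
  assumes simple: "simple_graph V E"
begin

lemma finite_V: "finite V"
  using simple unfolding simple_graph_def by blast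

lemma adj_sym: "E a b \<Longrightarrow> E b a"
  using simple unfolding simple_graph_def by blast

lemma symp_adj: "symp E"
  using adj_sym by (rule sympI)

lemma adj_irrefl: "\<not> E a a"
  using simple unfolding simple_graph_def by blast

lemma adj_in_V: "E a b \<Longrightarrow> a \<in> V \<and> b \<in> V"
  using simple unfolding simple_graph_def by blast

lemma induced_V: "induced E V = E"
  using adj_in_V unfolding induced_def by (auto simp: fun_eq_iff)

lemma components_eq: "components V E = component_of V E ` V"
  unfolding components_def component_of_def induced_V by blast

lemma component_of_subset: "component_of V E x \<subseteq> V"
  unfolding component_of_def by blast

lemma component_of_self: "x \<in> V \<Longrightarrow> x \<in> component_of V E x"
  unfolding component_of_def by simp

lemma component_of_closed: "y \<in> component_of V E x \<Longrightarrow> E y z \<Longrightarrow> z \<in> component_of V E x"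
  unfolding component_of_def using adj_in_V by (auto intro: rtranclp.rtrancl_into_rtrancl)

lemma component_of_eq:
  assumes "y \<in> component_of V E x"
  shows "component_of V E y = component_of V E x"
proof -
  have "E\<^sup>*\<^sup>* x y" "E\<^sup>*\<^sup>* y x"
    using assms sympD[OF symp_rtranclp[OF symp_adj]] unfolding component_of_def by auto
  then show ?thesis
    unfolding component_of_def by (auto intro: rtranclp_trans)
qed

lemma component_of_minimal:
  assumes "x \<in> A" and closed: "\<And>a b. a \<in> A \<Longrightarrow> E a b \<Longrightarrow> b \<in> A"
  shows "component_of V E x \<subseteq> A"
proof
  fix y assume "y \<in> component_of V E x"
  then have "E\<^sup>*\<^sup>* x y"
    unfolding component_of_def by simp
  then show "y \<in> A"
    by (induction rule: rtranclp_induct) (use assms in blast)+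
qed

lemma symp_induced: "symp (induced E C)"
proof (rule sympI)
  fix a b
  assume "induced E C a b"
  then show "induced E C b a"
    using adj_sym[of a b] unfolding induced_def by simp
qed

lemma connected_component_of:
  "connected_graph (component_of V E x) (induced E (component_of V E x))"
proof -
  define C where "C = component_of V E x"
  have from_x: "(induced E C)\<^sup>*\<^sup>* x y" if "E\<^sup>*\<^sup>* x y" for y
    using that
  proof (induction rule: rtranclp_induct)
    case (step y z)
    then have "y \<in> C" "z \<in> C"
      using adj_in_V component_of_closed unfolding C_def component_of_def by auto
    then have "induced E C y z"
      using step(2) unfolding induced_def by simp
    with step.IH show ?case
      by (rule rtranclp.rtrancl_into_rtrancl)
  qed simp
  have "(induced E C)\<^sup>*\<^sup>* a b" if "a \<in> C" "b \<in> C" for a b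
  proof -
    have "(induced E C)\<^sup>*\<^sup>* x a" "(induced E C)\<^sup>*\<^sup>* x b"
      using that from_x unfolding C_def component_of_def by auto
    then show ?thesis
      using rtranclp_trans sympD[OF symp_rtranclp[OF symp_induced]] by metis
  qed
  then show ?thesis
    unfolding connected_graph_def induced_subset[OF order_refl] C_def by blast
qed

lemma leaves_component_of:
  "leaves (component_of V E x) (induced E (component_of V E x)) = component_of V E x \<inter> leaves V E"
proof -
  have "{u \<in> component_of V E x. induced E (component_of V E x) v u} = {u \<in> V. E v u}"
    if "v \<in> component_of V E x" for v
    using that component_of_closed adj_in_V unfolding induced_def by auto
  then show ?thesis
    unfolding leaves_def using component_of_subset by auto
qed

lemma leaves_iff_pendant: "v \<in> leaves V E \<longleftrightarrow> v \<in> V \<and> (\<exists>u. pendant E v u)"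
proof -
  have "{u \<in> V. E v u} = Collect (E v)"
    using adj_in_V by blast
  then have "card {u \<in> V. E v u} = 1 \<longleftrightarrow> (\<exists>u. Collect (E v) = {u})"
    using card_1_singleton_iff[of "Collect (E v)"] by simp
  then show ?thesis
    unfolding leaves_def pendant_def by (simp add: set_eq_iff)
qed

lemma nonleaf_other_neighbour:
  assumes "v \<in> V - leaves V E" "E v u"
  shows "\<exists>w. E v w \<and> w \<noteq> u"
  using assms leaves_iff_pendant[of v] unfolding pendant_def by blast

lemma component_of_pendant_pair:
  assumes "pendant E v u" "pendant E u v" "v \<in> V"
  shows "component_of V E v = {u, v}"
proof
  show "component_of V E v \<subseteq> {u, v}"
    using assms(1,2) unfolding pendant_def by (intro component_of_minimal) auto
  show "{u, v} \<subseteq> component_of V E v"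
    using assms component_of_self component_of_closed unfolding pendant_def by blast
qed

lemma has_cycle_induced: "C \<subseteq> V \<Longrightarrow> has_cycle C (induced E C) \<Longrightarrow> has_cycle V E"
  unfolding has_cycle_def induced_def by blast

lemma has_cycle_min_degree_ge2:
  assumes "has_cycle V E"
  shows "\<exists>T. T \<noteq> {} \<and> T \<subseteq> V \<and> min_degree_ge2 E T"
proof -
  obtain xs where xs: "length xs \<ge> 3" "distinct xs" "set xs \<subseteq> V"
    and cyc: "\<And>i. i < length xs \<Longrightarrow> E (xs ! i) (xs ! ((i + 1) mod length xs))"
    using assms unfolding has_cycle_def by blast
  define n where "n = length xs"
  have "\<exists>u w. u \<noteq> w \<and> u \<in> set xs \<and> w \<in> set xs \<and> E (xs ! i) u \<and> E (xs ! i) w" if "i < n" for i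
  proof -
    define p where "p = (if i = 0 then n - 1 else i - 1)"
    define q where "q = (if i = n - 1 then 0 else i + 1)"
    have "Suc (n - 1) = n"
      using xs(1) unfolding n_def by simp
    then have "p < n" "q < n" "p \<noteq> q" "(p + 1) mod n = i" "(i + 1) mod n = q"
      using that xs(1) unfolding p_def q_def n_def by auto
    then have "E (xs ! i) (xs ! p)" "E (xs ! i) (xs ! q)" "xs ! p \<noteq> xs ! q"
      using cyc[of p] cyc[of i] adj_sym \<open>i < n\<close> xs(2) nth_eq_iff_index_eq unfolding n_def by metis+
    then show ?thesis
      using \<open>p < n\<close> \<open>q < n\<close> unfolding n_def by (meson nth_mem)
  qed
  then have "min_degree_ge2 E (set xs)"
    unfolding min_degree_ge2_def n_def by (metis in_set_conv_nth)
  moreover have "set xs \<noteq> {}"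
    using xs(1) by auto
  ultimately show ?thesis
    using xs(3) by blast
qed

lemma chord_has_cycle:
  assumes path: "is_path E xs" and "set xs \<subseteq> V"
    and "j < length xs" "Suc i < j" and chord: "E (xs ! i) (xs ! j)"
  shows "has_cycle V E"
proof -
  define ys where "ys = drop i (take (Suc j) xs)"
  have len: "length ys = Suc j - i"
    using assms(3) unfolding ys_def by simp
  have nth: "ys ! k = xs ! (i + k)" if "k < length ys" for k
    using that len assms(3) unfolding ys_def by simp
  show ?thesis
    unfolding has_cycle_def
  proof (intro exI conjI allI impI)
    show "3 \<le> length ys" "distinct ys" "set ys \<subseteq> V"
      using len assms(2,4) path unfolding ys_def is_path_def
      by (auto dest: in_set_dropD in_set_takeD)
    fix k assume "k < length ys"
    show "E (ys ! k) (ys ! ((k + 1) mod length ys))"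
    proof (cases "Suc k < length ys")
      case True
      then show ?thesis
        using path len assms(3) nth[of k] nth[of "Suc k"] unfolding is_path_def by simp
    next
      case False
      then have "k = j - i" "k + 1 = length ys"
        using \<open>k < length ys\<close> len by auto
      have "0 < length ys"
        using \<open>k < length ys\<close> by linarith
      then have "ys ! k = xs ! j" "ys ! 0 = xs ! i"
        using nth[OF \<open>k < length ys\<close>] nth[of 0] \<open>k = j - i\<close> assms(4) by simp_all
      then show ?thesis
        using adj_sym[OF chord] \<open>k + 1 = length ys\<close> by simp
    qed
  qed
qed

lemma path_covers_nonleaves:
  assumes "xs \<noteq> []"
    and closed: "\<And>y w. y \<in> set xs \<Longrightarrow> E y w \<Longrightarrow> w \<notin> leaves V E \<Longrightarrow> w \<in> set xs"
  shows "component_of V E (hd xs) - leaves V E \<subseteq> set xs"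
proof -
  define A where "A = set xs \<union> {v. \<exists>u\<in>set xs. pendant E v u}"
  have "b \<in> A" if "a \<in> A" "E a b" for a b
  proof (cases "a \<in> set xs")
    case True
    show ?thesis
    proof (cases "b \<in> leaves V E")
      case True
      then obtain u where "pendant E b u"
        using leaves_iff_pendant by blast
      then have "pendant E b a"
        using adj_sym[OF \<open>E a b\<close>] unfolding pendant_def by auto
      then show ?thesis
        using \<open>a \<in> set xs\<close> unfolding A_def by blast
    next
      case False
      then show ?thesis
        using closed \<open>a \<in> set xs\<close> \<open>E a b\<close> unfolding A_def by blast
    qed
  next
    case False
    then obtain u where "u \<in> set xs" "pendant E a u"
      using \<open>a \<in> A\<close> unfolding A_def by blast
    then show ?thesis
      using \<open>E a b\<close> unfolding A_def pendant_def by auto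
  qed
  then have "component_of V E (hd xs) \<subseteq> A"
    using \<open>xs \<noteq> []\<close> by (intro component_of_minimal) (auto simp: A_def)
  moreover have "v \<in> leaves V E" if "v \<in> V" "pendant E v u" for v u
    using that leaves_iff_pendant by blast
  ultimately show ?thesis
    using component_of_subset unfolding A_def by blast
qed

end

section \<open>Graphs with a \<open>CF\<close>-free circular ordering are caterpillar forests\<close>

locale CF_free_ordered_graph = finite_simple_graph +
  fixes pos :: "'a \<Rightarrow> nat"
  assumes inj_pos: "inj_on pos V" and CF_free: "CF_free V E pos"
begin

lemma pos_neq: "a \<in> V \<Longrightarrow> b \<in> V \<Longrightarrow> a \<noteq> b \<Longrightarrow> pos a \<noteq> pos b"
  using inj_pos by (meson inj_on_eq_iff)

lemma cyclic4_cases_in_V: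
  assumes "{a, b, c, d} \<subseteq> V" "distinct [a, b, c, d]"
  shows "cyclic4 pos a b c d \<or> cyclic4 pos a b d c \<or> cyclic4 pos a c b d \<or> cyclic4 pos a c d b \<or>
    cyclic4 pos a d b c \<or> cyclic4 pos a d c b"
  using assms by (intro cyclic4_cases) (auto simp: pos_neq)

lemma no_pattern4:
  assumes "(4, F) \<in> CF" "{w, x, y, z} \<subseteq> V" "distinct [w, x, y, z]" "cyclic4 pos w x y z"
  shows "\<not> ((E w x \<longleftrightarrow> {0, 1} \<in> F) \<and> (E w y \<longleftrightarrow> {0, 2} \<in> F) \<and> (E w z \<longleftrightarrow> {0, 3} \<in> F) \<and>
     (E x y \<longleftrightarrow> {1, 2} \<in> F) \<and> (E x z \<longleftrightarrow> {1, 3} \<in> F) \<and> (E y z \<longleftrightarrow> {2, 3} \<in> F))"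
    (is "\<not> ?adjacency")
proof
  assume ?adjacency
  then have "contains_pattern V E pos 4 F"
    unfolding contains_pattern4_iff[OF symp_adj]
    using assms(2-4) unfolding clockwise4_iff by blast
  with assms(1) CF_free show False
    unfolding CF_free_def by auto
qed

lemma triangle_free: "E a b \<Longrightarrow> E b c \<Longrightarrow> \<not> E a c"
proof
  assume edges: "E a b" "E b c" "E a c"
  then have V: "{a, b, c} \<subseteq> V" and "distinct [a, b, c]"
    using adj_in_V adj_irrefl by auto
  with pos_neq have "clockwise pos [a, b, c] \<or> clockwise pos [a, c, b]"
    using cyclic3_total[of pos a b c] by (auto simp: clockwise3_iff)
  moreover have "E b a" "E c b" "E c a"
    using edges adj_sym by blast+
  ultimately have "\<exists>x y z. {x, y, z} \<subseteq> V \<and> clockwise pos [x, y, z] \<and> E x y \<and> E x z \<and> E y z"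
    using V edges by blast
  then have "contains_pattern V E pos 3 {{0, 1}, {1, 2}, {2, 0}}"
    unfolding contains_pattern3_iff[OF symp_adj] by (simp add: doubleton_eq_iff)
  moreover have "\<not> contains_pattern V E pos 3 {{0, 1}, {1, 2}, {2, 0}}"
    using CF_free unfolding CF_free_def CF_def by simp
  ultimately show False by contradiction
qed

lemma C4_pattern_free:
  assumes "{w, x, y, z} \<subseteq> V" "distinct [w, x, y, z]" "cyclic4 pos w x y z"
    and "E w x" "E x y" "E y z" "E z w"
  shows "E w y \<or> E x z"
  using no_pattern4[of "{{0, 1}, {1, 2}, {2, 3}, {3, 0}}" w x y z] assms adj_sym[OF \<open>E z w\<close>]
  unfolding CF_def by (simp add: doubleton_eq_iff)

lemma crossed_C4_pattern_free:
  assumes "{w, x, y, z} \<subseteq> V" "distinct [w, x, y, z]" "cyclic4 pos w x y z"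
    and "E w x" "E x z" "E z y" "E y w"
  shows "E w z \<or> E x y"
  using no_pattern4[of "{{0, 1}, {1, 3}, {3, 2}, {2, 0}}" w x y z] assms adj_sym[OF \<open>E z y\<close>]
    adj_sym[OF \<open>E y w\<close>]
  unfolding CF_def by (simp add: doubleton_eq_iff)

lemma P4_pattern_free:
  assumes "{w, x, y, z} \<subseteq> V" "distinct [w, x, y, z]" "cyclic4 pos w x y z"
    and "E w x" "E x y" "E y z"
  shows "E w y \<or> E w z \<or> E x z"
  using no_pattern4[of "{{0, 1}, {1, 2}, {2, 3}}" w x y z] assms
  unfolding CF_def by (simp add: doubleton_eq_iff)

lemma crossed_P4_pattern_free:
  assumes "{w, x, y, z} \<subseteq> V" "distinct [w, x, y, z]" "cyclic4 pos w x y z"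
    and "E y w" "E w z" "E z x"
  shows "E w x \<or> E x y \<or> E y z"
  using no_pattern4[of "{{2, 0}, {0, 3}, {3, 1}}" w x y z] assms adj_sym[OF \<open>E y w\<close>]
    adj_sym[OF \<open>E z x\<close>]
  unfolding CF_def by (simp add: doubleton_eq_iff)

lemma no_4_cycle:
  assumes "E a b" "E b c" "E c d" "a \<noteq> c" "b \<noteq> d"
  shows "\<not> E d a"
proof
  assume "E d a"
  with assms have adj: "E a b" "E b a" "E b c" "E c b" "E c d" "E d c" "E d a" "E a d"
    using adj_sym by blast+
  have nonadj: "\<not> E a c" "\<not> E c a" "\<not> E b d" "\<not> E d b"
    using triangle_free adj by blast+
  have V: "{a, b, c, d} \<subseteq> V"
    using assms adj_in_V by auto
  have dist: "distinct [a, b, c, d]"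
    using assms adj nonadj adj_irrefl by auto
  from cyclic4_cases_in_V[OF V dist] show False
  proof (elim disjE)
    assume "cyclic4 pos a b c d"
    then show False using C4_pattern_free[of a b c d] V dist adj nonadj by auto
  next
    assume "cyclic4 pos a b d c"
    then show False using crossed_C4_pattern_free[of a b d c] V dist adj nonadj by auto
  next
    assume "cyclic4 pos a c b d"
    then have "cyclic4 pos c b d a" unfolding cyclic4_def by auto
    then show False using crossed_C4_pattern_free[of c b d a] V dist adj nonadj by auto
  next
    assume "cyclic4 pos a c d b"
    then have "cyclic4 pos b a c d" unfolding cyclic4_def by auto
    then show False using crossed_C4_pattern_free[of b a c d] V dist adj nonadj by auto
  next
    assume "cyclic4 pos a d b c"
    then have "cyclic4 pos b c a d" unfolding cyclic4_def by auto
    then show False using crossed_C4_pattern_free[of b c a d] V dist adj nonadj by auto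
  next
    assume "cyclic4 pos a d c b"
    then show False using C4_pattern_free[of a d c b] V dist adj nonadj by auto
  qed
qed

lemma path_ends_separated:
  assumes "E a b" "E b c" "E c d" "a \<noteq> c" "b \<noteq> d"
  shows "cyclic3 pos b a c \<longleftrightarrow> \<not> cyclic3 pos b d c"
proof (rule ccontr)
  assume same_side: "\<not> (cyclic3 pos b a c \<longleftrightarrow> \<not> cyclic3 pos b d c)"
  have adj: "E a b" "E b a" "E b c" "E c b" "E c d" "E d c"
    and nonadj: "\<not> E a c" "\<not> E c a" "\<not> E b d" "\<not> E d b" "\<not> E a d" "\<not> E d a"
    using assms adj_sym triangle_free no_4_cycle by blast+
  have V: "{a, b, c, d} \<subseteq> V"
    using assms adj_in_V by auto
  have dist: "distinct [a, b, c, d]"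
    using assms adj nonadj adj_irrefl by auto
  from cyclic4_cases_in_V[OF V dist] show False
  proof (elim disjE)
    assume "cyclic4 pos a b c d"
    then show False using P4_pattern_free[of a b c d] V dist adj nonadj by auto
  next
    assume "cyclic4 pos a b d c"
    then show False using same_side unfolding cyclic4_def cyclic3_def by linarith
  next
    assume "cyclic4 pos a c b d"
    then have "cyclic4 pos b d a c" unfolding cyclic4_def by auto
    then show False using crossed_P4_pattern_free[of b d a c] V dist adj nonadj by auto
  next
    assume "cyclic4 pos a c d b"
    then show False using same_side unfolding cyclic4_def cyclic3_def by linarith
  next
    assume "cyclic4 pos a d b c"
    then have "cyclic4 pos c a d b" unfolding cyclic4_def by auto
    then show False using crossed_P4_pattern_free[of c a d b] V dist adj nonadj by auto
  next
    assume "cyclic4 pos a d c b"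
    then have "cyclic4 pos d c b a" unfolding cyclic4_def by auto
    then show False using P4_pattern_free[of d c b a] V dist adj nonadj by auto
  qed
qed

lemma min_degree_ge2_empty:
  assumes "T \<subseteq> V" and T: "min_degree_ge2 E T"
  shows "T = {}"
proof -
  have other_nb: "\<exists>e\<in>T. E d e \<and> c \<noteq> e" if "d \<in> T" for c d
    using T that unfolding min_degree_ge2_def by metis
  have no_path: False if "E b c" "E c d" "b \<noteq> d" "{b, c, d} \<subseteq> T" for b c d
    using that
  proof (induction "card (arc pos V b c d)" arbitrary: b c d rule: less_induct)
    case less
    obtain e where e: "e \<in> T" "E d e" "c \<noteq> e"
      using other_nb less.prems(4) by blast
    have "b \<noteq> e"
      using adj_sym[OF \<open>E d e\<close>] triangle_free[OF less.prems(1,2)] by blast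
    have in_V: "b \<in> V" "c \<in> V" "d \<in> V" "e \<in> V"
      using less.prems(4) e(1) \<open>T \<subseteq> V\<close> by auto
    have "b \<noteq> c" "c \<noteq> d" "d \<noteq> e"
      using less.prems(1,2) e(2) adj_irrefl by auto
    then have "pos b \<noteq> pos c" "pos b \<noteq> pos d" "pos c \<noteq> pos d" "pos c \<noteq> pos e" "pos d \<noteq> pos e"
      using pos_neq[OF in_V(1,2)] pos_neq[OF in_V(1,3) less.prems(3)] pos_neq[OF in_V(2,3)]
        pos_neq[OF in_V(2,4) e(3)] pos_neq[OF in_V(3,4)] by auto
    moreover have "cyclic3 pos c b d \<longleftrightarrow> \<not> cyclic3 pos c e d"
      using less.prems(1,2) e(2) less.prems(3) e(3) by (rule path_ends_separated)
    ultimately have "arc pos V c d e \<subset> arc pos V b c d"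
      using in_V(3) by (rule arc_psubset)
    then have "card (arc pos V c d e) < card (arc pos V b c d)"
      by (simp add: psubset_card_mono arc_def finite_V)
    moreover have "{c, d, e} \<subseteq> T"
      using less.prems(4) e(1) by auto
    ultimately show False
      using less.hyps less.prems(2) e(2,3) by blast
  qed
  show ?thesis
  proof (rule ccontr)
    assume "T \<noteq> {}"
    then obtain u v w where "u \<noteq> w" "{u, v, w} \<subseteq> T" "E v u" "E v w"
      using T unfolding min_degree_ge2_def by blast
    then show False
      using no_path[OF adj_sym[OF \<open>E v u\<close>]] by blast
  qed
qed

lemma acyclic: "\<not> has_cycle V E"
  using has_cycle_min_degree_ge2 min_degree_ge2_empty by blast

lemma path_chordless:
  assumes "is_path E xs" "set xs \<subseteq> V" "i < length xs" "j < length xs" "E (xs ! i) (xs ! j)"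
  shows "j = Suc i \<or> i = Suc j"
proof -
  have "i \<noteq> j"
    using assms(5) adj_irrefl by auto
  moreover have "\<not> Suc i < j" "\<not> Suc j < i"
    using chord_has_cycle[OF assms(1,2)] assms(3-5) adj_sym acyclic by blast+
  ultimately show ?thesis by linarith
qed

lemma path_is_path_graph:
  assumes path: "is_path E xs" and "set xs \<subseteq> V"
  shows "is_path_graph (set xs) (induced E (set xs))"
proof -
  have "E a b \<longleftrightarrow> (\<exists>i. Suc i < length xs \<and> {a, b} = {xs ! i, xs ! Suc i})"
    if ab: "a \<in> set xs" "b \<in> set xs" for a b
  proof
    assume "E a b"
    obtain i j where "i < length xs" "a = xs ! i" "j < length xs" "b = xs ! j"
      using ab by (auto simp: in_set_conv_nth)
    then show "\<exists>i. Suc i < length xs \<and> {a, b} = {xs ! i, xs ! Suc i}"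
      using path_chordless[OF assms] \<open>E a b\<close> by (metis insert_commute)
  next
    assume "\<exists>i. Suc i < length xs \<and> {a, b} = {xs ! i, xs ! Suc i}"
    then show "E a b"
      using path adj_sym unfolding is_path_def by (metis doubleton_eq_iff)
  qed
  then show ?thesis
    using path unfolding is_path_graph_def is_path_def induced_def by blast
qed

lemma no_subdivided_claw:
  assumes "E v x" "E v y" "E v z" "x \<noteq> y" "x \<noteq> z" "y \<noteq> z"
    and "E x x'" "x' \<noteq> v" "E y y'" "y' \<noteq> v" "E z z'" "z' \<noteq> v"
  shows False
proof -
  have "cyclic3 pos v b a \<longleftrightarrow> \<not> cyclic3 pos v a' a"
    if "E v a" "E v b" "a \<noteq> b" "E a a'" "a' \<noteq> v" for a b a'
    using adj_sym[OF \<open>E v b\<close>] \<open>E v a\<close> \<open>E a a'\<close> \<open>a \<noteq> b\<close>[symmetric] \<open>a' \<noteq> v\<close>[symmetric]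
    by (rule path_ends_separated)
  then have "cyclic3 pos v y x \<longleftrightarrow> cyclic3 pos v z x" "cyclic3 pos v x y \<longleftrightarrow> cyclic3 pos v z y"
    "cyclic3 pos v x z \<longleftrightarrow> cyclic3 pos v y z"
    using assms by metis+
  moreover have "{v, x, y, z} \<subseteq> V" "v \<noteq> x" "v \<noteq> y" "v \<noteq> z"
    using assms adj_in_V adj_irrefl by auto
  then have "cyclic3 pos v x y \<noteq> cyclic3 pos v y x" "cyclic3 pos v y z \<noteq> cyclic3 pos v z y"
    "cyclic3 pos v x z \<noteq> cyclic3 pos v z x"
    using assms(4-6) pos_neq cyclic3_total cyclic3_asym by (metis insert_subset)+
  ultimately show False by blast
qed

lemma longest_path_absorbs:
  assumes "S \<subseteq> V - leaves V E" and path: "is_path E xs" "set xs \<subseteq> S"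
    and longest: "\<And>ys. is_path E ys \<Longrightarrow> set ys \<subseteq> S \<Longrightarrow> length ys \<le> length xs"
    and "w \<in> S" "k < length xs" "E (xs ! k) w"
  shows "w \<in> set xs"
proof (rule ccontr)
  assume "w \<notin> set xs"
  have edge: "E (xs ! i) (xs ! Suc i)" if "Suc i < length xs" for i
    using path that unfolding is_path_def by blast
  consider "k = 0" | "k = length xs - 1" | "0 < k" "Suc k < length xs"
    using \<open>k < length xs\<close> by linarith
  then show False
  proof cases
    case 1
    then have "is_path E (w # xs)"
      using path \<open>w \<notin> set xs\<close> adj_sym[OF \<open>E (xs ! k) w\<close>]
      by (intro is_path_Cons) (auto simp: hd_conv_nth)
    then show False
      using longest[of "w # xs"] path \<open>w \<in> S\<close> by simp
  next
    case 2
    then have "is_path E (xs @ [w])"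
      using path \<open>w \<notin> set xs\<close> \<open>E (xs ! k) w\<close> by (intro is_path_snoc) (auto simp: last_conv_nth)
    then show False
      using longest[of "xs @ [w]"] path \<open>w \<in> S\<close> by simp
  next
    case 3
    define v a b where "v = xs ! k" and "a = xs ! (k - 1)" and "b = xs ! Suc k"
    have "E v a" "E v b" "E v w"
      using edge[of "k - 1"] edge[of k] adj_sym 3 \<open>E (xs ! k) w\<close> unfolding v_def a_def b_def by auto
    have "a \<in> set xs" "b \<in> set xs" "a \<noteq> b"
      using path 3 unfolding a_def b_def is_path_def by (auto simp: nth_eq_iff_index_eq)
    then have "{a, b, w} \<subseteq> V - leaves V E" "a \<noteq> w" "b \<noteq> w"
      using path(2) \<open>w \<in> S\<close> \<open>w \<notin> set xs\<close> assms(1) by auto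
    then obtain a' b' w' where "E a a'" "a' \<noteq> v" "E b b'" "b' \<noteq> v" "E w w'" "w' \<noteq> v"
      using nonleaf_other_neighbour adj_sym \<open>E v a\<close> \<open>E v b\<close> \<open>E v w\<close> by (metis insert_subset)
    then show False
      using no_subdivided_claw \<open>E v a\<close> \<open>E v b\<close> \<open>E v w\<close> \<open>a \<noteq> b\<close> \<open>a \<noteq> w\<close> \<open>b \<noteq> w\<close> by blast
  qed
qed

lemma component_nonleaves_path_graph:
  assumes "x \<in> V"
  defines "S \<equiv> component_of V E x - leaves V E"
  shows "is_path_graph S (induced E S)"
proof (cases "S = {}")
  case True
  then show ?thesis
    unfolding is_path_graph_def by simp
next
  case False
  then obtain s where "s \<in> S" by blast
  moreover have "finite S"
    using finite_V component_of_subset finite_subset unfolding S_def by blast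
  ultimately obtain xs where path: "is_path E xs" "set xs \<subseteq> S" "xs \<noteq> []"
    and longest: "\<And>ys. is_path E ys \<Longrightarrow> set ys \<subseteq> S \<Longrightarrow> length ys \<le> length xs"
    using ex_longest_path by metis
  have "S \<subseteq> V - leaves V E"
    using component_of_subset unfolding S_def by blast
  have closed: "w \<in> set xs" if "y \<in> set xs" "E y w" "w \<notin> leaves V E" for y w
  proof -
    obtain k where "k < length xs" "y = xs ! k"
      using \<open>y \<in> set xs\<close> by (auto simp: in_set_conv_nth)
    moreover have "w \<in> S"
      using that path(2) component_of_closed unfolding S_def by blast
    ultimately show ?thesis
      using longest_path_absorbs[OF \<open>S \<subseteq> V - leaves V E\<close> path(1,2) longest] \<open>E y w\<close> by blast
  qed
  have "component_of V E (hd xs) - leaves V E \<subseteq> set xs"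
    using path(3) closed by (rule path_covers_nonleaves)
  moreover have "component_of V E (hd xs) = component_of V E x"
    using path(2,3) component_of_eq unfolding S_def by (metis Diff_iff hd_in_set subsetD)
  ultimately have "set xs = S"
    using path(2) unfolding S_def by blast
  then show ?thesis
    using path_is_path_graph path(1,2) \<open>S \<subseteq> V - leaves V E\<close> by auto
qed

lemma component_is_caterpillar:
  assumes "x \<in> V"
  shows "is_caterpillar (component_of V E x) (induced E (component_of V E x))"
  unfolding is_caterpillar_def is_tree_def
proof (intro conjI)
  let ?C = "component_of V E x"
  show "?C \<noteq> {}"
    using component_of_self assms by blast
  show "connected_graph ?C (induced E ?C)"
    by (rule connected_component_of)
  show "\<not> has_cycle ?C (induced E ?C)"
    using acyclic has_cycle_induced component_of_subset by blast
  have "?C - leaves ?C (induced E ?C) = ?C - leaves V E"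
    unfolding leaves_component_of by blast
  then show "is_path_graph (?C - leaves ?C (induced E ?C))
      (induced (induced E ?C) (?C - leaves ?C (induced E ?C)))"
    unfolding induced_subset[OF Diff_subset] using component_nonleaves_path_graph[OF assms] by simp
qed

theorem caterpillar_forest: "caterpillar_forest V E"
  unfolding caterpillar_forest_def components_eq using component_is_caterpillar by blast

end

section \<open>Caterpillar forests have a \<open>CF\<close>-free circular ordering\<close>

text \<open>The comb: spine vertices \<open>(j, 0)\<close> form a path, and each tooth \<open>(j, t + 1)\<close> hangs at \<open>(j, 0)\<close>.\<close>

fun comb_edge :: "nat \<times> nat \<Rightarrow> nat \<times> nat \<Rightarrow> bool" where
  "comb_edge (j, s) (k, t) \<longleftrightarrow>
    (s = 0 \<and> t = 0 \<and> (k = Suc j \<or> j = Suc k)) \<or> ((s = 0) \<noteq> (t = 0) \<and> j = k)"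

definition comb_forest_edge :: "nat \<times> nat \<times> nat \<Rightarrow> nat \<times> nat \<times> nat \<Rightarrow> bool" where
  "comb_forest_edge p q \<longleftrightarrow> fst p = fst q \<and> comb_edge (snd p) (snd q)"

fun comb_side :: "nat \<times> nat \<Rightarrow> bool" where
  "comb_side (j, t) \<longleftrightarrow> (t = 0 \<longleftrightarrow> even j)"

lemma comb_edge_side: "comb_edge p q \<Longrightarrow> comb_side p \<noteq> comb_side q"
  by (cases p; cases q) auto

lemma comb_noncrossing:
  fixes c c' :: nat
  assumes "comb_edge p q" "comb_edge p' q'" "comb_side p" "comb_side p'"
    and "(c, p) < (c', p')" "(c', q') < (c, q)"
  shows False
proof -
  obtain j s k t j' s' k' t' where "p = (j, s)" "q = (k, t)" "p' = (j', s')" "q' = (k', t')"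
    by (metis prod.exhaust)
  with assms show False
    by (auto simp: less_prod_def') presburger+
qed

fun layout_key :: "nat \<times> nat \<times> nat \<Rightarrow> int \<times> int \<times> int \<times> int" where
  "layout_key (c, j, t) =
    (if comb_side (j, t) then (0, int c, int j, int t) else (1, - int c, - int j, - int t))"

lemma layout_key_less_iff:
  "layout_key (c, p) < layout_key (c', p') \<longleftrightarrow>
    (if comb_side p then \<not> comb_side p' \<or> (c, p) < (c', p')
     else \<not> comb_side p' \<and> (c', p') < (c, p))"
  by (cases p; cases p') (auto simp: less_prod_def')

lemma inj_layout_key: "inj layout_key"
proof (rule injI)
  fix u v :: "nat \<times> nat \<times> nat"
  assume "layout_key u = layout_key v"
  then show "u = v"
    by (cases u; cases v) (auto split: if_splits)
qed

definition rank :: "'a set \<Rightarrow> ('a \<Rightarrow> 'b::linorder) \<Rightarrow> 'a \<Rightarrow> nat" where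
  "rank V K v = card {w \<in> V. K w < K v}"

lemma rank_less_iff:
  assumes "finite V" "u \<in> V" "v \<in> V"
  shows "rank V K u < rank V K v \<longleftrightarrow> K u < K v"
  unfolding rank_def
proof
  assume "K u < K v"
  then have "{w \<in> V. K w < K u} \<subset> {w \<in> V. K w < K v}"
    using assms(2) by auto
  then show "card {w \<in> V. K w < K u} < card {w \<in> V. K w < K v}"
    using assms(1) by (simp add: psubset_card_mono)
next
  assume less: "card {w \<in> V. K w < K u} < card {w \<in> V. K w < K v}"
  show "K u < K v"
  proof (rule ccontr)
    assume "\<not> K u < K v"
    then have "{w \<in> V. K w < K v} \<subseteq> {w \<in> V. K w < K u}"
      by auto
    then have "card {w \<in> V. K w < K v} \<le> card {w \<in> V. K w < K u}"
      using assms(1) by (simp add: card_mono)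
    with less show False
      by simp
  qed
qed

lemma inj_on_rank:
  assumes "finite V" "inj_on K V"
  shows "inj_on (rank V K) V"
proof (rule inj_onI)
  fix u v assume "u \<in> V" "v \<in> V" and eq: "rank V K u = rank V K v"
  then have "\<not> K u < K v" "\<not> K v < K u"
    using rank_less_iff[where K = K, OF assms(1) \<open>u \<in> V\<close> \<open>v \<in> V\<close>]
      rank_less_iff[where K = K, OF assms(1) \<open>v \<in> V\<close> \<open>u \<in> V\<close>] eq
    by simp_all
  then have "K u = K v"
    by simp
  then show "u = v"
    using inj_onD[OF assms(2)] \<open>u \<in> V\<close> \<open>v \<in> V\<close> by blast
qed

context finite_simple_graph
begin

lemma caterpillar_spine_exists:
  assumes "x \<in> V" and cat: "is_caterpillar (component_of V E x) (induced E (component_of V E x))"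
  shows "\<exists>xs. caterpillar_spine E (component_of V E x) xs"
proof -
  define C where "C = component_of V E x"
  define S where "S = C - leaves V E"
  have "C - leaves C (induced E C) = S"
    unfolding C_def S_def leaves_component_of by blast
  then have "is_path_graph S (induced E S)"
    using cat induced_subset[of S C] unfolding is_caterpillar_def C_def S_def by auto
  then obtain xs where xs: "distinct xs" "set xs = S"
    and induced_edges: "\<forall>a\<in>S. \<forall>b\<in>S. induced E S a b \<longleftrightarrow>
      (\<exists>i. Suc i < length xs \<and> {a, b} = {xs ! i, xs ! Suc i})"
    unfolding is_path_graph_def by (elim exE conjE) (rule that)
  have edges: "E a b \<longleftrightarrow> (\<exists>i. Suc i < length xs \<and> {a, b} = {xs ! i, xs ! Suc i})"
    if "a \<in> S" "b \<in> S" for a b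
    using induced_edges[rule_format, OF that] that unfolding induced_def by simp
  have partner: "\<exists>u\<in>C. pendant E v u \<and> (u \<notin> S \<longrightarrow> pendant E u v \<and> C = {u, v})"
    if "v \<in> C - S" for v
  proof -
    have "v \<in> C" "v \<in> leaves V E"
      using that unfolding S_def by auto
    then obtain u where "pendant E v u"
      by (auto simp: leaves_iff_pendant)
    then have "E v u"
      unfolding pendant_def by simp
    then have "u \<in> C"
      using \<open>v \<in> C\<close> component_of_closed unfolding C_def by blast
    moreover have "pendant E u v \<and> C = {u, v}" if "u \<notin> S"
    proof
      have "u \<in> leaves V E"
        using \<open>u \<notin> S\<close> \<open>u \<in> C\<close> unfolding S_def by blast
      then obtain w where "pendant E u w"
        by (auto simp: leaves_iff_pendant)
      then show "pendant E u v"
        using adj_sym[OF \<open>E v u\<close>] unfolding pendant_def by auto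
      moreover have "v \<in> V" "C = component_of V E v"
        using \<open>v \<in> C\<close> component_of_subset component_of_eq unfolding C_def by auto
      ultimately show "C = {u, v}"
        using \<open>pendant E v u\<close> component_of_pendant_pair by simp
    qed
    ultimately show ?thesis
      using \<open>pendant E v u\<close> by blast
  qed
  show ?thesis
  proof (cases "S = {}")
    case False
    have "\<exists>u\<in>set xs. pendant E v u" if "v \<in> C - set xs" for v
      using partner[of v] that xs(2) False leaves_iff_pendant unfolding S_def by auto
    then have "caterpillar_spine E C xs"
      using False xs edges unfolding caterpillar_spine_def S_def by auto
    then show ?thesis
      unfolding C_def by blast
  next
    case True \<comment> \<open>no non-leaves: the component is a single edge\<close>
    obtain v where "v \<in> C"
      using cat unfolding is_caterpillar_def is_tree_def C_def by blast
    then obtain u where "pendant E u v" "C = {u, v}"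
      using partner[of v] True by auto
    then have "caterpillar_spine E C [v]"
      using adj_irrefl unfolding caterpillar_spine_def by auto
    then show ?thesis
      unfolding C_def by blast
  qed
qed

lemma spine_comb_embedding:
  fixes idx :: "'a \<Rightarrow> nat"
  assumes spine: "caterpillar_spine E C xs" and "inj_on idx C"
  shows "\<exists>\<kappa>. inj_on \<kappa> C \<and> (\<forall>a\<in>C. \<forall>b\<in>C. E a b \<longrightarrow> comb_edge (\<kappa> a) (\<kappa> b))"
proof -
  have dist: "distinct xs"
    and spine_edges: "\<And>a b. a \<in> set xs \<Longrightarrow> b \<in> set xs \<Longrightarrow>
      E a b \<longleftrightarrow> (\<exists>i. Suc i < length xs \<and> {a, b} = {xs ! i, xs ! Suc i})"
    and legs: "\<And>v. v \<in> C - set xs \<Longrightarrow> \<exists>u\<in>set xs. pendant E v u"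
    using spine unfolding caterpillar_spine_def by blast+
  have "\<exists>i<length xs. if v \<in> set xs then xs ! i = v else pendant E v (xs ! i)" if "v \<in> C" for v
  proof (cases "v \<in> set xs")
    case True
    then show ?thesis
      by (simp add: in_set_conv_nth)
  next
    case False
    then obtain u where "u \<in> set xs" "pendant E v u"
      using legs \<open>v \<in> C\<close> by blast
    then show ?thesis
      using False by (auto simp: in_set_conv_nth)
  qed
  then obtain j where j: "\<And>v. v \<in> C \<Longrightarrow> j v < length xs"
    and spine_j: "\<And>v. v \<in> C \<Longrightarrow> v \<in> set xs \<Longrightarrow> xs ! j v = v"
    and leg_j: "\<And>v. v \<in> C \<Longrightarrow> v \<notin> set xs \<Longrightarrow> pendant E v (xs ! j v)"
    by metis
  have j_eq: "j v = i" if "v \<in> C" "v \<in> set xs" "i < length xs" "xs ! i = v" for v i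
    using that j spine_j dist nth_eq_iff_index_eq by metis
  define \<kappa> where "\<kappa> v = (j v, if v \<in> set xs then 0 else Suc (idx v))" for v
  have "inj_on \<kappa> C"
  proof (rule inj_onI)
    fix u v assume "u \<in> C" "v \<in> C" "\<kappa> u = \<kappa> v"
    then have "j u = j v" and side: "u \<in> set xs \<longleftrightarrow> v \<in> set xs"
      and leg: "u \<notin> set xs \<Longrightarrow> idx u = idx v"
      unfolding \<kappa>_def by (auto split: if_splits)
    show "u = v"
    proof (cases "u \<in> set xs")
      case True
      then show ?thesis
        using spine_j[of u] spine_j[of v] side \<open>j u = j v\<close> \<open>u \<in> C\<close> \<open>v \<in> C\<close> by metis
    next
      case False
      then show ?thesis
        using inj_onD[OF \<open>inj_on idx C\<close> leg] \<open>u \<in> C\<close> \<open>v \<in> C\<close> by blast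
    qed
  qed
  moreover have "comb_edge (\<kappa> a) (\<kappa> b)" if "a \<in> C" "b \<in> C" "E a b" for a b
  proof (cases "a \<in> set xs"; cases "b \<in> set xs")
    assume "a \<in> set xs" "b \<in> set xs"
    then obtain i where "Suc i < length xs" "{a, b} = {xs ! i, xs ! Suc i}"
      using spine_edges \<open>E a b\<close> by blast
    then have "(j a = i \<and> j b = Suc i) \<or> (j a = Suc i \<and> j b = i)"
      using j_eq[of a i] j_eq[of a "Suc i"] j_eq[of b i] j_eq[of b "Suc i"] that
        \<open>a \<in> set xs\<close> \<open>b \<in> set xs\<close>
      by (auto simp: doubleton_eq_iff)
    then show ?thesis
      using \<open>a \<in> set xs\<close> \<open>b \<in> set xs\<close> unfolding \<kappa>_def by auto
  next
    assume "a \<in> set xs" "b \<notin> set xs"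
    then have "xs ! j b = a"
      using leg_j[of b] adj_sym[OF \<open>E a b\<close>] \<open>b \<in> C\<close> unfolding pendant_def by auto
    then have "j a = j b"
      using j_eq \<open>a \<in> set xs\<close> j that by blast
    then show ?thesis
      using \<open>a \<in> set xs\<close> \<open>b \<notin> set xs\<close> unfolding \<kappa>_def by simp
  next
    assume "a \<notin> set xs" "b \<in> set xs"
    then have "xs ! j a = b"
      using leg_j[of a] \<open>E a b\<close> \<open>a \<in> C\<close> unfolding pendant_def by auto
    then have "j b = j a"
      using j_eq \<open>b \<in> set xs\<close> j that by blast
    then show ?thesis
      using \<open>a \<notin> set xs\<close> \<open>b \<in> set xs\<close> unfolding \<kappa>_def by simp
  next
    assume "a \<notin> set xs" "b \<notin> set xs"
    then show ?thesis
      using leg_j[of a] j[of a] \<open>E a b\<close> \<open>a \<in> C\<close> unfolding pendant_def by auto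
  qed
  ultimately show ?thesis
    by blast
qed

lemma caterpillar_forest_comb_embedding:
  assumes "caterpillar_forest V E"
  shows "\<exists>\<kappa>. inj_on \<kappa> V \<and> (\<forall>a b. E a b \<longrightarrow> comb_forest_edge (\<kappa> a) (\<kappa> b))"
proof -
  obtain idx :: "'a \<Rightarrow> nat" where idx: "inj_on idx V"
    using finite_imp_inj_to_nat_seg[OF finite_V] by blast
  have "finite (components V E)"
    unfolding components_eq using finite_V by simp
  then obtain cidx :: "'a set \<Rightarrow> nat" where cidx: "inj_on cidx (components V E)"
    using finite_imp_inj_to_nat_seg by blast
  have "\<exists>\<kappa>. inj_on \<kappa> C \<and> (\<forall>a\<in>C. \<forall>b\<in>C. E a b \<longrightarrow> comb_edge (\<kappa> a) (\<kappa> b))"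
    if C: "C \<in> components V E" for C
  proof -
    obtain x where "x \<in> V" "C = component_of V E x"
      using C unfolding components_eq by blast
    moreover have "inj_on idx C"
      using idx component_of_subset inj_on_subset calculation by blast
    ultimately show ?thesis
      using assms caterpillar_spine_exists spine_comb_embedding
      unfolding caterpillar_forest_def components_eq by blast
  qed
  then obtain K where K: "\<And>C. C \<in> components V E \<Longrightarrow> inj_on (K C) C"
    and K_edge: "\<And>C a b. C \<in> components V E \<Longrightarrow> a \<in> C \<Longrightarrow> b \<in> C \<Longrightarrow> E a b \<Longrightarrow> comb_edge (K C a) (K C b)"
    by metis
  define \<kappa> where "\<kappa> v = (cidx (component_of V E v), K (component_of V E v) v)" for v
  have comp: "component_of V E v \<in> components V E" "v \<in> component_of V E v" if "v \<in> V" for v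
    using that component_of_self unfolding components_eq by auto
  have "inj_on \<kappa> V"
  proof (rule inj_onI)
    fix u v assume "u \<in> V" "v \<in> V" "\<kappa> u = \<kappa> v"
    then have "component_of V E u = component_of V E v"
      using comp cidx unfolding \<kappa>_def by (auto dest: inj_onD)
    then show "u = v"
      using K comp \<open>u \<in> V\<close> \<open>v \<in> V\<close> \<open>\<kappa> u = \<kappa> v\<close> unfolding \<kappa>_def by (metis inj_onD snd_conv)
  qed
  moreover have "comb_forest_edge (\<kappa> a) (\<kappa> b)" if "E a b" for a b
  proof -
    have "a \<in> V" "b \<in> component_of V E a"
      using that adj_in_V component_of_closed comp by blast+
    then have "component_of V E b = component_of V E a"
      using component_of_eq by blast
    then show ?thesis
      using K_edge comp \<open>a \<in> V\<close> \<open>b \<in> component_of V E a\<close> that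
      unfolding \<kappa>_def comb_forest_edge_def by auto
  qed
  ultimately show ?thesis
    by blast
qed

lemma noncrossing_bipartite_CF_free:
  assumes "inj_on pos V"
    and bipartite: "\<And>a b. E a b \<Longrightarrow> L a \<noteq> L b"
    and left_first: "\<And>a b. a \<in> V \<Longrightarrow> b \<in> V \<Longrightarrow> L a \<Longrightarrow> \<not> L b \<Longrightarrow> pos a < pos b"
    and noncrossing: "\<And>a b c d. E a b \<Longrightarrow> E c d \<Longrightarrow> L a \<Longrightarrow> L c \<Longrightarrow> \<not> L b \<Longrightarrow> \<not> L d \<Longrightarrow>
       pos a < pos c \<Longrightarrow> pos b < pos d \<Longrightarrow> False"
  shows "CF_free V E pos"
proof -
  have no_3_path: False
    if "{w, x, y, z} \<subseteq> V" "cyclic4 pos w x y z" "E w x" "E x y" "E y z" for w x y z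
  proof -
    have "L w = L y" "L x = L z" "L w \<noteq> L x"
      using bipartite that(3-5) by metis+
    then show False
      using left_first[of w x] left_first[of w z] left_first[of y x] left_first[of y z]
        left_first[of x w] left_first[of z w] left_first[of x y] left_first[of z y] that(1,2)
      unfolding cyclic4_def by (cases "L w") auto
  qed
  have no_crossing: False
    if "{w, x, y, z} \<subseteq> V" "cyclic4 pos w x y z" "E w y" "E x z" for w x y z
  proof -
    have E: "E w y" "E y w" "E x z" "E z x"
      using that(3,4) adj_sym[OF that(3)] adj_sym[OF that(4)] by blast+
    have "L y \<longleftrightarrow> \<not> L w" "L z \<longleftrightarrow> \<not> L x"
      using bipartite E by metis+
    then show False
      using noncrossing[OF E(1) E(3)] noncrossing[OF E(3) E(1)] noncrossing[OF E(1) E(4)]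
        noncrossing[OF E(4) E(1)] noncrossing[OF E(2) E(3)] noncrossing[OF E(3) E(2)]
        noncrossing[OF E(2) E(4)] noncrossing[OF E(4) E(2)]
        left_first[of w x] left_first[of w z] left_first[of y x] left_first[of y z]
        left_first[of x w] left_first[of z w] left_first[of x y] left_first[of z y]
        left_first[of w y] left_first[of y w] left_first[of x z] left_first[of z x] that(1,2)
      unfolding cyclic4_def by (cases "L w"; cases "L x") auto
  qed
  have "\<not> contains_pattern V E pos 3 {{0, 1}, {1, 2}, {2, 0}}"
  proof
    assume "contains_pattern V E pos 3 {{0, 1}, {1, 2}, {2, 0}}"
    then obtain x y z where "E x y" "E x z" "E y z"
      unfolding contains_pattern3_iff[OF symp_adj] by (auto simp: doubleton_eq_iff)
    then show False
      using bipartite[of x y] bipartite[of x z] bipartite[of y z] by (cases "L x"; cases "L y") auto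
  qed
  moreover have "\<not> contains_pattern V E pos 4 F" if F: "{0, 1} \<in> F" "{1, 2} \<in> F" "{2, 3} \<in> F" for F
  proof
    assume "contains_pattern V E pos 4 F"
    then obtain w x y z where "{w, x, y, z} \<subseteq> V" "cyclic4 pos w x y z" "E w x" "E x y" "E y z"
      unfolding contains_pattern4_iff[OF symp_adj] clockwise4_iff using F by auto
    then show False
      by (rule no_3_path)
  qed
  moreover have "\<not> contains_pattern V E pos 4 F" if F: "{0, 2} \<in> F" "{1, 3} \<in> F" for F
  proof
    assume "contains_pattern V E pos 4 F"
    then obtain w x y z where "{w, x, y, z} \<subseteq> V" "cyclic4 pos w x y z" "E w y" "E x z"
      unfolding contains_pattern4_iff[OF symp_adj] clockwise4_iff using F by auto
    then show False
      by (rule no_crossing)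
  qed
  ultimately show ?thesis
    unfolding CF_free_def CF_def by (simp add: doubleton_eq_iff)
qed

lemma comb_embedding_CF_free_ordering:
  fixes \<kappa> :: "'a \<Rightarrow> nat \<times> nat \<times> nat"
  assumes "inj_on \<kappa> V"
    and comb: "\<And>a b. E a b \<Longrightarrow> comb_forest_edge (\<kappa> a) (\<kappa> b)"
  shows "\<exists>pos :: 'a \<Rightarrow> nat. circular_ordering V pos \<and> CF_free V E pos"
proof -
  define K where "K v = layout_key (\<kappa> v)" for v
  define pos where "pos = rank V K"
  define L where "L v \<longleftrightarrow> comb_side (snd (\<kappa> v))" for v
  have pos_less: "pos u < pos v \<longleftrightarrow> K u < K v" if "u \<in> V" "v \<in> V" for u v
    unfolding pos_def by (rule rank_less_iff[OF finite_V that])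
  have K_less: "K u < K v \<longleftrightarrow> (if L u then \<not> L v \<or> \<kappa> u < \<kappa> v else \<not> L v \<and> \<kappa> v < \<kappa> u)" for u v
    using layout_key_less_iff[of "fst (\<kappa> u)" "snd (\<kappa> u)" "fst (\<kappa> v)" "snd (\<kappa> v)"]
    unfolding K_def L_def by simp
  have "inj_on K V"
    unfolding K_def using comp_inj_on[OF \<open>inj_on \<kappa> V\<close> inj_on_subset[OF inj_layout_key subset_UNIV]]
    by (simp add: comp_def)
  with finite_V have "inj_on pos V"
    unfolding pos_def by (rule inj_on_rank)
  moreover have "CF_free V E pos"
  proof (rule noncrossing_bipartite_CF_free[OF \<open>inj_on pos V\<close>])
    show "L a \<noteq> L b" if "E a b" for a b
      using comb[OF that] comb_edge_side unfolding L_def comb_forest_edge_def by blast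
    show "pos a < pos b" if "a \<in> V" "b \<in> V" "L a" "\<not> L b" for a b
      using that pos_less K_less by simp
    show False
      if "E a b" "E c d" "L a" "L c" "\<not> L b" "\<not> L d" "pos a < pos c" "pos b < pos d" for a b c d
    proof -
      have same: "fst (\<kappa> a) = fst (\<kappa> b)" "fst (\<kappa> c) = fst (\<kappa> d)"
        and edges: "comb_edge (snd (\<kappa> a)) (snd (\<kappa> b))" "comb_edge (snd (\<kappa> c)) (snd (\<kappa> d))"
        using comb[OF that(1)] comb[OF that(2)] unfolding comb_forest_edge_def by blast+
      have "\<kappa> a < \<kappa> c" "\<kappa> d < \<kappa> b"
        using that pos_less K_less adj_in_V by auto
      moreover have "\<kappa> b = (fst (\<kappa> a), snd (\<kappa> b))" "\<kappa> d = (fst (\<kappa> c), snd (\<kappa> d))"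
        using same by (metis prod.collapse)+
      ultimately have "(fst (\<kappa> a), snd (\<kappa> a)) < (fst (\<kappa> c), snd (\<kappa> c))"
        "(fst (\<kappa> c), snd (\<kappa> d)) < (fst (\<kappa> a), snd (\<kappa> b))"
        by simp_all
      then show False
        using comb_noncrossing edges that(3-6) unfolding L_def by blast
    qed
  qed
  ultimately show ?thesis
    unfolding circular_ordering_def by blast
qed

end

theorem proposition6:
  fixes V :: "'a set" and E :: "'a \<Rightarrow> 'a \<Rightarrow> bool"
  assumes "simple_graph V E"
  shows "caterpillar_forest V E \<longleftrightarrow>
    (\<exists>pos :: 'a \<Rightarrow> nat. circular_ordering V pos \<and> CF_free V E pos)"
proof
  interpret finite_simple_graph V E
    by (rule finite_simple_graph.intro) fact
  assume "caterpillar_forest V E"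
  then obtain \<kappa> where "inj_on \<kappa> V" "\<And>a b. E a b \<Longrightarrow> comb_forest_edge (\<kappa> a) (\<kappa> b)"
    using caterpillar_forest_comb_embedding by blast
  then show "\<exists>pos :: 'a \<Rightarrow> nat. circular_ordering V pos \<and> CF_free V E pos"
    using comb_embedding_CF_free_ordering by blast
next
  assume "\<exists>pos :: 'a \<Rightarrow> nat. circular_ordering V pos \<and> CF_free V E pos"
  then obtain pos :: "'a \<Rightarrow> nat" where "inj_on pos V" "CF_free V E pos"
    unfolding circular_ordering_def by blast
  with assms interpret CF_free_ordered_graph V E pos
    by (intro CF_free_ordered_graph.intro finite_simple_graph.intro
        CF_free_ordered_graph_axioms.intro)
  show "caterpillar_forest V E"
    by (rule caterpillar_forest)
qed

end
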